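(* Let $L$ be a factorial R-lattice of type I admitting a regular equivalence relation $\sim$. Then every element of $L$ is the supremum of a family of mutually orthogonal minimal elements.
   Context: Orthocomplemented lattice (paper's convention): a set $L$ with a partial order $\le$ in which every subset has a supremum and an infimum ($l\vee l'$, $l\wedge l'$ denote binary sup/inf, $0=\inf L$, $1=\sup L$), such that: (continuity) for every increasing net $(l_i)$ and every $l$, $\bigvee_i(l\wedge l_i)=l\wedge\bigvee_i l_i$, and for every decreasing net $(l_i)$ and every $l$, $\bigwedge_i(l\vee l_i)=l\vee\bigwedge_i l_i$; (modularity) $l\le l''$ implies $(l\vee l')\wedge l''=l\vee(l'\wedge l'')$ for all $l'$; together with a map $l\mapsto l^\perp$, also written $1-l$, satisfying $l^{\perp\perp}=l$, $l\vee l^\perp=1$, $l\wedge l^\perp=0$, and $l\le l'\Rightarrow l'^\perp\le l^\perp$. For $l'\le l$ put $l-l'=(1-l')\wedge l$. Write $\perp(l)=\{l'\in L: l'\le 1-l\}$; elements of $\perp(l)$ are orthogonal to $l$; a family is mutually orthogonal if any two distinct members are orthogonal. $l$ commutes with $l'$ if $l=(l\wedge l')\vee(l\wedge l'^\perp)$; $c(l)$ is the set of elements commuting with $l$; $C(L)=\bigcap_{l\in L}c(l)$. $L$ is factorial if $C(L)=\{0,1\}$ and abelian if $C(L)=L$. For $l\in L$, $L\wedge l=\{l'\in L:l'\le l\}$ is an orthocomplemented lattice with complement $l'\mapsto l-l'$; $l$ is an abelian element if $L\wedge l$ is abelian. A factorial lattice is of type I if it has at least one nonzero abelian element. $L$ is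 an R-lattice if $C(L\wedge l)=\{c\wedge l: c\in C(L)\}$ for every $l\in L$. An element $l\ne 0$ is minimal if for every $l'\in L$ either $l\wedge l'=0$ or $l\wedge l'=l$; $Min(L)$ is the set of minimal elements and $Min(l)=\{m\in Min(L): m\le l\}$. The supremum of the empty family is $0$. Regular equivalence relation: for an equivalence relation $\sim$ on $L$ write $l\le_\sim l'$ if there is $l''\le l'$ with $l\sim l''$. $\sim$ is regular if: (1) $l\sim 0\iff l=0$; (2) $l\ge l'$ and $l\le_\sim l'$ imply $l\sim l'$; (3) for all $l,l'$, $l\le_\sim l'$ or $l'\le_\sim l$; (4) if $(l_i)$, $(l_i')$ are families of mutually orthogonal elements with $l_i\sim l_i'$ for all $i$, then $\bigvee_i l_i\sim\bigvee_i l_i'$; (5) $l'\le l$ and $l'\sim l$ imply $l'=l$. *)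

theory Defs
  imports Main
begin

unbundle lattice_syntax

text \<open>An orthocomplemented lattice in the paper's sense: the complete lattice structure is
the type class complete_lattice (0 = bot, 1 = top), and perp is the orthocomplement.\<close>

definition up_directed :: "'a::order set \<Rightarrow> bool" where
  "up_directed D \<longleftrightarrow> (\<forall>x\<in>D. \<forall>y\<in>D. \<exists>z\<in>D. x \<le> z \<and> y \<le> z)"

definition down_directed :: "'a::order set \<Rightarrow> bool" where
  "down_directed D \<longleftrightarrow> (\<forall>x\<in>D. \<forall>y\<in>D. \<exists>z\<in>D. z \<le> x \<and> z \<le> y)"

definition ortho_lattice :: "('a::complete_lattice \<Rightarrow> 'a) \<Rightarrow> bool" where
  "ortho_lattice perp \<longleftrightarrow>
     (\<forall>(D::'a set) l. up_directed D \<longrightarrow> (SUP d\<in>D. l \<sqinter> d) = l \<sqinter> Sup D) \<and>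
     (\<forall>(D::'a set) l. down_directed D \<longrightarrow> (INF d\<in>D. l \<squnion> d) = l \<squnion> Inf D) \<and>
     (\<forall>x y (z::'a). x \<le> z \<longrightarrow> (x \<squnion> y) \<sqinter> z = x \<squnion> (y \<sqinter> z)) \<and>
     (\<forall>l. perp (perp l) = l) \<and>
     (\<forall>l. l \<squnion> perp l = top) \<and>
     (\<forall>l. l \<sqinter> perp l = bot) \<and>
     (\<forall>l l'. l \<le> l' \<longrightarrow> perp l' \<le> perp l)"

definition commutes :: "('a::lattice \<Rightarrow> 'a) \<Rightarrow> 'a \<Rightarrow> 'a \<Rightarrow> bool" where
  "commutes c x y \<longleftrightarrow> x = (x \<sqinter> y) \<squnion> (x \<sqinter> c y)"

definition centre :: "'a::lattice set \<Rightarrow> ('a \<Rightarrow> 'a) \<Rightarrow> 'a set" where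
  "centre S c = {x\<in>S. \<forall>y\<in>S. commutes c x y}"

text \<open>the lattice L \<and> l: carrier and relative complement l' \<mapsto> l - l'\<close>
definition below :: "'a::order \<Rightarrow> 'a set" where
  "below l = {x. x \<le> l}"

definition rel_compl :: "('a::lattice \<Rightarrow> 'a) \<Rightarrow> 'a \<Rightarrow> 'a \<Rightarrow> 'a" where
  "rel_compl perp l x = perp x \<sqinter> l"

definition C_L :: "('a::lattice \<Rightarrow> 'a) \<Rightarrow> 'a set" where
  "C_L perp = centre UNIV perp"

definition C_sub :: "('a::lattice \<Rightarrow> 'a) \<Rightarrow> 'a \<Rightarrow> 'a set" where
  "C_sub perp l = centre (below l) (rel_compl perp l)"

definition factorial :: "('a::complete_lattice \<Rightarrow> 'a) \<Rightarrow> bool" where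
  "factorial perp \<longleftrightarrow> C_L perp = {bot, top}"

definition abelian_elem :: "('a::complete_lattice \<Rightarrow> 'a) \<Rightarrow> 'a \<Rightarrow> bool" where
  "abelian_elem perp l \<longleftrightarrow> C_sub perp l = below l"

definition type_I :: "('a::complete_lattice \<Rightarrow> 'a) \<Rightarrow> bool" where
  "type_I perp \<longleftrightarrow> factorial perp \<and> (\<exists>l. l \<noteq> bot \<and> abelian_elem perp l)"

definition R_lattice :: "('a::complete_lattice \<Rightarrow> 'a) \<Rightarrow> bool" where
  "R_lattice perp \<longleftrightarrow> (\<forall>l. C_sub perp l = {c \<sqinter> l | c. c \<in> C_L perp})"

definition minimal :: "'a::complete_lattice \<Rightarrow> bool" where
  "minimal l \<longleftrightarrow> l \<noteq> bot \<and> (\<forall>l'. l \<sqinter> l' = bot \<or> l \<sqinter> l' = l)"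

definition orthogonal :: "('a \<Rightarrow> 'a) \<Rightarrow> 'a::order \<Rightarrow> 'a \<Rightarrow> bool" where
  "orthogonal perp x y \<longleftrightarrow> x \<le> perp y"

definition sim_le :: "('a \<Rightarrow> 'a \<Rightarrow> bool) \<Rightarrow> 'a::order \<Rightarrow> 'a \<Rightarrow> bool" where
  "sim_le R l l' \<longleftrightarrow> (\<exists>l''. l'' \<le> l' \<and> R l l'')"

text \<open>Regular equivalence relation. Families in (4) are indexed by subsets of the lattice
itself; this loses no generality.\<close>
definition regular_equiv :: "('a::complete_lattice \<Rightarrow> 'a) \<Rightarrow> ('a \<Rightarrow> 'a \<Rightarrow> bool) \<Rightarrow> bool" where
  "regular_equiv perp R \<longleftrightarrow>
     equivp R \<and>
     (\<forall>l. R l bot \<longleftrightarrow> l = bot) \<and>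
     (\<forall>l l'. l' \<le> l \<and> sim_le R l l' \<longrightarrow> R l l') \<and>
     (\<forall>l l'. sim_le R l l' \<or> sim_le R l' l) \<and>
     (\<forall>(I::'a set) f g.
        (\<forall>i\<in>I. \<forall>j\<in>I. i \<noteq> j \<longrightarrow> orthogonal perp (f i) (f j)) \<longrightarrow>
        (\<forall>i\<in>I. \<forall>j\<in>I. i \<noteq> j \<longrightarrow> orthogonal perp (g i) (g j)) \<longrightarrow>
        (\<forall>i\<in>I. R (f i) (g i)) \<longrightarrow>
        R (SUP i\<in>I. f i) (SUP i\<in>I. g i)) \<and>
     (\<forall>l l'. l' \<le> l \<and> R l' l \<longrightarrow> l' = l)"

end

theory Submission
  imports Defs
begin

(* The argument has two independent halves.
   (1) Atomicity.  In a factorial R-lattice the centre of L \<sqinter> a is {0, a} for every a, so a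
       nonzero abelian element a (which exists by type I) has nothing strictly between 0 and a:
       it is an atom.  A regular equivalence relation compares a with every nonzero x; either
       way one finds a copy m \<le> x of a (m \<sim> a), and axioms (2) and (5) show that such a copy
       is again minimal.  Hence every nonzero element lies above a minimal element.
   (2) Decomposition.  In an orthocomplemented modular lattice in which every nonzero element
       lies above a minimal element, take by Zorn's lemma a maximal mutually orthogonal family
       M of minimal elements below l and put s = \<Squnion>M.  By maximality l \<sqinter> perp s contains no
       minimal element, hence is 0, and modularity gives l = (s \<squnion> perp s) \<sqinter> l = s \<squnion> (perp s \<sqinter> l) = s. *)

lemma minimal_iff_atom:
  fixes m :: "'a::complete_lattice"
  shows "minimal m \<longleftrightarrow> m \<noteq> bot \<and> (\<forall>x\<le>m. x = bot \<or> x = m)"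
proof
  assume "minimal m"
  then show "m \<noteq> bot \<and> (\<forall>x\<le>m. x = bot \<or> x = m)"
    unfolding minimal_def by (metis inf.absorb_iff2)
next
  assume atom: "m \<noteq> bot \<and> (\<forall>x\<le>m. x = bot \<or> x = m)"
  have "m \<sqinter> y = bot \<or> m \<sqinter> y = m" for y
    using atom inf_le1 by blast
  then show "minimal m" using atom unfolding minimal_def by blast
qed

text \<open>In a factorial R-lattice an abelian element has no elements strictly between 0 and
  itself, because its relative centre, which is all of below a, equals {0 \<sqinter> a, 1 \<sqinter> a}.\<close>

lemma abelian_elem_atom:
  fixes perp :: "'a::complete_lattice \<Rightarrow> 'a"
  assumes "factorial perp" and "R_lattice perp" and "abelian_elem perp a" and "x \<le> a"
  shows "x = bot \<or> x = a"
proof -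
  have "below a = C_sub perp a"
    using assms(3) unfolding abelian_elem_def by simp
  also have "\<dots> = {c \<sqinter> a | c. c \<in> {bot, top}}"
    using assms(1,2) unfolding R_lattice_def factorial_def by simp
  finally have "x \<in> {c \<sqinter> a | c. c \<in> {bot, top}}"
    using assms(4) unfolding below_def by blast
  then show ?thesis by auto
qed

lemma regular_equivD:
  assumes "regular_equiv perp R"
  shows regular_equiv_equivp: "equivp R"
    and regular_equiv_bot: "R x bot \<longleftrightarrow> x = bot"
    and regular_equiv_total: "sim_le R x y \<or> sim_le R y x"
    and regular_equiv_no_proper_copy: "y \<le> x \<Longrightarrow> R y x \<Longrightarrow> y = x"
  using assms unfolding regular_equiv_def by (elim conjE; simp)+

text \<open>If a is an atom and x is nonzero, some element below x is equivalent to a: otherwise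
  x would be equivalent to an element below a, i.e. to 0 or to a, and x \<noteq> 0.\<close>

lemma atom_copy_below:
  fixes perp :: "'a::complete_lattice \<Rightarrow> 'a" and R :: "'a \<Rightarrow> 'a \<Rightarrow> bool"
  assumes reg: "regular_equiv perp R"
    and atom: "\<And>y. y \<le> a \<Longrightarrow> y = bot \<or> y = a" and "x \<noteq> bot"
  shows "\<exists>m\<le>x. R a m"
proof (cases "sim_le R a x")
  case True
  then show ?thesis unfolding sim_le_def by blast
next
  case False
  then obtain y where "y \<le> a" and "R x y"
    using regular_equiv_total[OF reg] unfolding sim_le_def by blast
  then have "y = a"
    using atom regular_equiv_bot[OF reg] \<open>x \<noteq> bot\<close> by blast
  then show ?thesis
    using \<open>R x y\<close> equivp_symp[OF regular_equiv_equivp[OF reg]] by blast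
qed

text \<open>Every element equivalent to a nonzero atom is itself minimal: a nonzero element below
  the copy m is comparable (via the relation) with a, and in both cases axiom (5) forces it
  to be all of m.\<close>

lemma atom_copy_minimal:
  fixes perp :: "'a::complete_lattice \<Rightarrow> 'a" and R :: "'a \<Rightarrow> 'a \<Rightarrow> bool"
  assumes reg: "regular_equiv perp R"
    and atom: "\<And>y. y \<le> a \<Longrightarrow> y = bot \<or> y = a" and "a \<noteq> bot" and am: "R a m"
  shows "minimal m"
proof -
  have sym: "\<And>x y. R x y \<Longrightarrow> R y x" and trans: "\<And>x y z. R x y \<Longrightarrow> R y z \<Longrightarrow> R x z"
    using regular_equiv_equivp[OF reg] by (meson equivp_symp equivp_transp)+
  have "m \<noteq> bot"
    using am \<open>a \<noteq> bot\<close> regular_equiv_bot[OF reg] by blast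
  moreover have "x = m" if "x \<le> m" and "x \<noteq> bot" for x
  proof (cases "sim_le R x a")
    case True
    then obtain y where "y \<le> a" and "R x y" unfolding sim_le_def by blast
    then have "y = a"
      using atom regular_equiv_bot[OF reg] \<open>x \<noteq> bot\<close> by blast
    then have "R x m" using \<open>R x y\<close> am trans by blast
    then show ?thesis using regular_equiv_no_proper_copy[OF reg] \<open>x \<le> m\<close> by blast
  next
    case False
    then obtain y where "y \<le> x" and "R a y"
      using regular_equiv_total[OF reg] unfolding sim_le_def by blast
    then have "R y m" using am sym trans by blast
    then have "y = m"
      using regular_equiv_no_proper_copy[OF reg] \<open>y \<le> x\<close> \<open>x \<le> m\<close> order.trans by blast
    then show ?thesis using \<open>y \<le> x\<close> \<open>x \<le> m\<close> by simp
  qed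
  ultimately show ?thesis unfolding minimal_iff_atom by blast
qed

lemma regular_equiv_atomic:
  fixes perp :: "'a::complete_lattice \<Rightarrow> 'a" and R :: "'a \<Rightarrow> 'a \<Rightarrow> bool" and a x :: 'a
  assumes "regular_equiv perp R"
    and "\<And>y. y \<le> a \<Longrightarrow> y = bot \<or> y = a" and "a \<noteq> bot" and "x \<noteq> bot"
  shows "\<exists>m. minimal m \<and> m \<le> x"
proof -
  obtain m where "m \<le> x" and "R a m" using atom_copy_below[OF assms(1,2,4)] by blast
  then show ?thesis using atom_copy_minimal[OF assms(1-3)] by blast
qed

lemma ortho_latticeD:
  assumes "ortho_lattice perp"
  shows ortho_modular: "x \<le> z \<Longrightarrow> (x \<squnion> y) \<sqinter> z = x \<squnion> (y \<sqinter> z)"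
    and ortho_perp_perp: "perp (perp x) = x"
    and ortho_sup_perp: "x \<squnion> perp x = top"
    and ortho_inf_perp: "x \<sqinter> perp x = bot"
    and ortho_antimono: "x \<le> y \<Longrightarrow> perp y \<le> perp x"
  using assms unfolding ortho_lattice_def by (elim conjE; simp)+

lemma orthogonal_sym:
  assumes "ortho_lattice perp" and "orthogonal perp x y"
  shows "orthogonal perp y x"
  using assms unfolding orthogonal_def by (metis ortho_antimono ortho_perp_perp)

definition ortho_atom_families :: "('a::complete_lattice \<Rightarrow> 'a) \<Rightarrow> 'a \<Rightarrow> 'a set set" where
  "ortho_atom_families perp l =
     {M. (\<forall>m\<in>M. minimal m \<and> m \<le> l) \<and> (\<forall>x\<in>M. \<forall>y\<in>M. x \<noteq> y \<longrightarrow> orthogonal perp x y)}"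

text \<open>Orthogonality is a pairwise condition, so the union of a chain of such families is
  again one; Zorn's lemma yields a maximal family.\<close>

lemma maximal_ortho_atom_family:
  "\<exists>M\<in>ortho_atom_families perp l. \<forall>X\<in>ortho_atom_families perp l. M \<subseteq> X \<longrightarrow> X = M"
proof (rule Zorn_Lemma, rule ballI)
  let ?A = "ortho_atom_families perp l"
  fix C assume C: "C \<in> chains ?A"
  have sub: "C \<subseteq> ?A" using chainsD2[OF C] .
  show "\<Union>C \<in> ?A" unfolding ortho_atom_families_def
  proof (intro CollectI conjI ballI impI)
    fix m assume "m \<in> \<Union>C"
    then show "minimal m" "m \<le> l" using sub unfolding ortho_atom_families_def by blast+
  next
    fix x y assume "x \<in> \<Union>C" "y \<in> \<Union>C" "x \<noteq> y"
    then obtain X Y where XY: "X \<in> C" "Y \<in> C" "x \<in> X" "y \<in> Y" by blast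
    then have "X \<subseteq> Y \<or> Y \<subseteq> X" using chainsD[OF C] by blast
    then show "orthogonal perp x y"
      using sub XY \<open>x \<noteq> y\<close> unfolding ortho_atom_families_def by blast
  qed
qed

lemma ortho_eq_if_compl_disjoint:
  assumes ortho: "ortho_lattice perp" and "s \<le> l" and "perp s \<sqinter> l = bot"
  shows "s = l"
proof -
  have "l = (s \<squnion> perp s) \<sqinter> l" using ortho_sup_perp[OF ortho] by simp
  also have "\<dots> = s \<squnion> (perp s \<sqinter> l)" using ortho_modular[OF ortho \<open>s \<le> l\<close>] .
  also have "\<dots> = s" using assms(3) by simp
  finally show ?thesis by simp
qed

text \<open>In an atomic orthocomplemented modular lattice every element is the supremum of a
  mutually orthogonal family of minimal elements: the supremum s of a maximal family satisfies
  perp s \<sqinter> l = 0, since a minimal element below perp s \<sqinter> l could be added to the family.\<close>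

lemma atomic_ortho_decomposition:
  fixes perp :: "'a::complete_lattice \<Rightarrow> 'a" and l :: 'a
  assumes ortho: "ortho_lattice perp"
    and atomic: "\<And>x::'a. x \<noteq> bot \<Longrightarrow> \<exists>m. minimal m \<and> m \<le> x"
  shows "\<exists>M. (\<forall>m\<in>M. minimal m) \<and> (\<forall>x\<in>M. \<forall>y\<in>M. x \<noteq> y \<longrightarrow> orthogonal perp x y) \<and> Sup M = l"
proof -
  let ?A = "ortho_atom_families perp l"
  obtain M where MA: "M \<in> ?A" and max: "\<forall>X\<in>?A. M \<subseteq> X \<longrightarrow> X = M"
    using maximal_ortho_atom_family[of perp l] by (elim bexE)
  have "Sup M \<le> l" using MA unfolding ortho_atom_families_def by (auto intro: Sup_least)
  moreover have "perp (Sup M) \<sqinter> l = bot"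
  proof (rule ccontr)
    assume "perp (Sup M) \<sqinter> l \<noteq> bot"
    then have "\<exists>m. minimal m \<and> m \<le> perp (Sup M) \<sqinter> l" by (rule atomic)
    then obtain m where m: "minimal m" and "m \<le> perp (Sup M) \<sqinter> l" by blast
    then have mperp: "m \<le> perp (Sup M)" and "m \<le> l" by simp_all
    have orth: "orthogonal perp m x" if "x \<in> M" for x
      using mperp ortho_antimono[OF ortho Sup_upper[OF that]] unfolding orthogonal_def by simp
    have "orthogonal perp x m" if "x \<in> M" for x
      using orthogonal_sym[OF ortho orth[OF that]] .
    then have "insert m M \<in> ?A"
      using MA m \<open>m \<le> l\<close> orth unfolding ortho_atom_families_def by auto
    moreover have "m \<notin> M"
    proof
      assume "m \<in> M"
      then have "m \<le> Sup M \<sqinter> perp (Sup M)" using mperp Sup_upper by simp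
      then show False using m ortho_inf_perp[OF ortho] unfolding minimal_def
        by (simp add: bot_unique)
    qed
    ultimately show False using max by blast
  qed
  ultimately have "Sup M = l" by (rule ortho_eq_if_compl_disjoint[OF ortho])
  then show ?thesis using MA unfolding ortho_atom_families_def by blast
qed

theorem mainTheorem8:
  fixes perp :: "'a::complete_lattice \<Rightarrow> 'a" and R :: "'a \<Rightarrow> 'a \<Rightarrow> bool"
  assumes "ortho_lattice perp"
    and "factorial perp"
    and "R_lattice perp"
    and "type_I perp"
    and "regular_equiv perp R"
  shows "\<forall>l. \<exists>M. (\<forall>m\<in>M. minimal m) \<and>
              (\<forall>x\<in>M. \<forall>y\<in>M. x \<noteq> y \<longrightarrow> orthogonal perp x y) \<and>
              Sup M = l"
proof
  fix l
  obtain a where "a \<noteq> bot" and "abelian_elem perp a"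
    using assms(4) unfolding type_I_def by blast
  then have atomic: "\<exists>m. minimal m \<and> m \<le> x" if "x \<noteq> bot" for x :: 'a
    using regular_equiv_atomic[OF assms(5) _ _ that] abelian_elem_atom[OF assms(2,3)] by blast
  show "\<exists>M. (\<forall>m\<in>M. minimal m) \<and> (\<forall>x\<in>M. \<forall>y\<in>M. x \<noteq> y \<longrightarrow> orthogonal perp x y) \<and> Sup M = l"
    using atomic_ortho_decomposition[OF assms(1) atomic] by blast
qed

end
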